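(* Let $\rho$ be a probability density on $[-\pi,\pi]$ whose Fourier series converges absolutely and with $\int_{-\pi}^\pi\rho(\theta)\sin\theta\cos\theta\,\mathrm{d}\theta=0$. For $K\in\mathbb{N}$ let $$p_K(\theta)=\frac{1}{2K+1}\Big(\sum_{k=-K}^Ke^{ik\theta}\Big)^2,\qquad\rho_K(\theta)=\frac{1}{2\pi}\int_{-\pi}^\pi\rho(\theta-\phi)p_K(\phi)\,\mathrm{d}\phi,$$ $$\nu_K(\mathrm{d}\theta)=\frac{2\pi}{4K+1}\sum_{\ell=-2K}^{2K}\rho_K\Big(\frac{2\pi\ell}{4K+1}\Big)\delta\Big(\theta-\frac{2\pi\ell}{4K+1}\Big)\mathrm{d}\theta.$$ Then each $\nu_K$ is a discrete probability measure on $[-\pi,\pi]$, $\int_{-\pi}^\pi\cos\theta\sin\theta\,\nu_K(\mathrm{d}\theta)=0$ for all $K$, and for every continuous $f$ on $[-\pi,\pi]$, $\lim_{K\to\infty}\int f\,\mathrm{d}\nu_K=\int_{-\pi}^\pi f(\theta)\rho(\theta)\,\mathrm{d}\theta$.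
   Context: $\rho$ is extended $2\pi$-periodically in the convolution. *)

theory Defs
  imports "HOL-Probability.Probability"
begin

definition fourier_coeff :: "(real \<Rightarrow> real) \<Rightarrow> int \<Rightarrow> complex" where
  "fourier_coeff \<rho> k =
     (LINT \<theta>:{-pi..pi}|lborel. complex_of_real (\<rho> \<theta>) * exp (- \<i> * of_int k * complex_of_real \<theta>))
     / complex_of_real (2 * pi)"

text \<open>2 pi-periodic extension of a function given on [-pi,pi) (its values elsewhere are ignored).\<close>
definition per_ext :: "(real \<Rightarrow> real) \<Rightarrow> real \<Rightarrow> real" where
  "per_ext \<rho> x = \<rho> (x - 2 * pi * of_int \<lfloor>(x + pi) / (2 * pi)\<rfloor>)"

text \<open>p_K(theta) = (1/(2K+1)) (sum_{k=-K}^K e^{ik theta})^2; the square is real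
  (the inner sum is the real Dirichlet kernel), so we take the real part.\<close>
definition pK :: "nat \<Rightarrow> real \<Rightarrow> real" where
  "pK K \<theta> = Re ((\<Sum>k\<in>{-int K..int K}. exp (\<i> * of_int k * complex_of_real \<theta>)) ^ 2)
              / (2 * real K + 1)"

definition rhoK :: "(real \<Rightarrow> real) \<Rightarrow> nat \<Rightarrow> real \<Rightarrow> real" where
  "rhoK \<rho> K \<theta> = (1 / (2 * pi)) * (LBINT \<phi>=-pi..pi. per_ext \<rho> (\<theta> - \<phi>) * pK K \<phi>)"

definition grid_pt :: "nat \<Rightarrow> int \<Rightarrow> real" where
  "grid_pt K l = 2 * pi * real_of_int l / (4 * real K + 1)"

definition nuK :: "(real \<Rightarrow> real) \<Rightarrow> nat \<Rightarrow> real measure" where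
  "nuK \<rho> K = point_measure UNIV
     (\<lambda>\<theta>. ennreal (\<Sum>l\<in>{-2 * int K..2 * int K}.
        if \<theta> = grid_pt K l then 2 * pi / (4 * real K + 1) * rhoK \<rho> K (grid_pt K l) else 0))"

end

(*
  Integrating h against nu_K is the same as integrating against rho the smoothed function
  T_K h (psi) = (1/(4K+1)) sum_l h(theta_l) p_K(theta_l - psi)  (grid_conv below), because
  rho_K is the convolution of rho with p_K.  The kernel p_K is a trigonometric polynomial of
  degree 2K and the 4K+1 equispaced grid points integrate trigonometric polynomials of degree
  at most 4K exactly, so T_K sends e^(i m theta) to a multiple of e^(i m psi) for |m| <= 2K:
  T_K 1 = 1 gives total mass one, and T_K (cos * sin) is a multiple of cos * sin, so the
  vanishing sin-cos moment of rho passes to nu_K.  Moreover p_K = D_K^2/(2K+1) with the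
  Dirichlet kernel D_K, and D_K(x) sin(x/2) = sin((2K+1)x/2) gives
  p_K(x) <= 1/((2K+1) sin^2(x/2)), so T_K f -> f pointwise on (-pi, pi) for continuous f;
  dominated convergence gives the limit.
*)

theory Submission
  imports Defs "HOL-Real_Asymp.Real_Asymp"
begin

section \<open>The Dirichlet kernel and the kernel pK\<close>

definition dirichlet_kernel :: "nat \<Rightarrow> real \<Rightarrow> real" where
  "dirichlet_kernel K x = 1 + 2 * (\<Sum>k=1..K. cos (real k * x))"

lemma sum_exp_eq_dirichlet_kernel:
  "(\<Sum>k\<in>{-int K..int K}. exp (\<i> * of_int k * complex_of_real x)) = complex_of_real (dirichlet_kernel K x)"
proof (induction K)
  case 0
  then show ?case by (simp add: dirichlet_kernel_def)
next
  case (Suc K)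
  have "{-int (Suc K)..int (Suc K)} = insert (-int (Suc K)) (insert (int (Suc K)) {-int K..int K})"
    by auto
  then have "(\<Sum>k\<in>{-int (Suc K)..int (Suc K)}. exp (\<i> * of_int k * complex_of_real x))
      = cis (real (Suc K) * x) + cis (- (real (Suc K) * x))
        + (\<Sum>k\<in>{-int K..int K}. exp (\<i> * of_int k * complex_of_real x))"
    by (simp add: cis_conv_exp algebra_simps)
  also have "\<dots> = complex_of_real (dirichlet_kernel (Suc K) x)"
    unfolding Suc by (simp add: dirichlet_kernel_def complex_eq_iff)
  finally show ?case .
qed

lemma pK_eq_dirichlet_kernel: "pK K x = (dirichlet_kernel K x)\<^sup>2 / (2 * real K + 1)"
  unfolding pK_def sum_exp_eq_dirichlet_kernel by (simp flip: of_real_power)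

lemma pK_nonneg: "pK K x \<ge> 0"
  by (simp add: pK_eq_dirichlet_kernel)

lemma dirichlet_kernel_mult_sin:
  "dirichlet_kernel K x * sin (x / 2) = sin ((2 * real K + 1) * x / 2)"
proof (induction K)
  case 0
  then show ?case by (simp add: dirichlet_kernel_def)
next
  case (Suc K)
  have "2 * cos (real (Suc K) * x) * sin (x / 2)
      = sin ((2 * real (Suc K) + 1) * x / 2) - sin ((2 * real K + 1) * x / 2)"
    using sin_add[of "real (Suc K) * x" "x / 2"] sin_diff[of "real (Suc K) * x" "x / 2"]
    by (simp add: algebra_simps add_divide_distrib)
  with Suc show ?case by (simp add: dirichlet_kernel_def algebra_simps)
qed

lemma abs_dirichlet_kernel_le: "\<bar>dirichlet_kernel K x\<bar> \<le> 2 * real K + 1"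
proof -
  have "\<bar>\<Sum>k=1..K. cos (real k * x)\<bar> \<le> (\<Sum>k=1..K. 1)"
    by (rule order_trans[OF sum_abs sum_mono]) simp
  then show ?thesis by (simp add: dirichlet_kernel_def)
qed

lemma pK_le: "pK K x \<le> 2 * real K + 1"
proof -
  have "(dirichlet_kernel K x)\<^sup>2 \<le> (2 * real K + 1)\<^sup>2"
    using power_mono[OF abs_dirichlet_kernel_le[of K x] abs_ge_zero, of 2] by simp
  then show ?thesis by (simp add: pK_eq_dirichlet_kernel divide_le_eq power2_eq_square)
qed

lemma pK_le_inverse_sin_sq:
  assumes "c > 0" "c \<le> (sin (x / 2))\<^sup>2"
  shows "pK K x \<le> 1 / (c * (2 * real K + 1))"
proof -
  have "(dirichlet_kernel K x)\<^sup>2 * (sin (x / 2))\<^sup>2 \<le> 1"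
    using dirichlet_kernel_mult_sin[of K x] abs_sin_le_one[of "(2 * real K + 1) * x / 2"]
    by (metis abs_le_square_iff abs_one one_power2 power_mult_distrib)
  moreover have "(dirichlet_kernel K x)\<^sup>2 * c \<le> (dirichlet_kernel K x)\<^sup>2 * (sin (x / 2))\<^sup>2"
    using assms by (simp add: mult_left_mono)
  ultimately have "(dirichlet_kernel K x)\<^sup>2 \<le> 1 / c"
    using assms by (simp add: field_simps)
  then show ?thesis
    by (simp add: pK_eq_dirichlet_kernel divide_right_mono flip: divide_divide_eq_left)
qed

lemma pK_periodic: "pK K (x + 2 * pi * of_int n) = pK K x"
proof -
  have "cos (real k * (x + 2 * pi * of_int n)) = cos (real k * x)" for k
  proof -
    have "real k * (x + 2 * pi * of_int n) = real k * x + 2 * pi * of_int (int k * n)"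
      by (simp add: algebra_simps)
    then show ?thesis by (simp only: cos_add cos_int_2pin sin_int_2pin)
  qed
  then show ?thesis by (simp add: pK_eq_dirichlet_kernel dirichlet_kernel_def)
qed

lemma pK_borel_measurable [measurable]: "pK K \<in> borel_measurable borel"
  unfolding pK_eq_dirichlet_kernel dirichlet_kernel_def
  by (intro borel_measurable_continuous_onI continuous_intros) auto

section \<open>Discrete orthogonality on the grid\<close>

lemma sum_power_root_of_unity_eq_0:
  fixes n :: int
  assumes "\<not> int N dvd n"
  shows "(\<Sum>j<N. exp (\<i> * of_int n * complex_of_real (2 * pi / real N)) ^ j) = 0"
proof (cases "N = 0")
  case False
  define z where "z = exp (\<i> * of_int n * complex_of_real (2 * pi / real N))"
  have "z ^ N = exp (2 * of_int n * pi * \<i>)"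
    using False by (simp add: z_def mult_ac flip: exp_of_nat_mult)
  then have zN: "z ^ N = 1"
    using exp_integer_2pi[of "of_int n"] by simp
  have "z \<noteq> 1"
  proof
    assume "z = 1"
    then obtain m :: int where "of_int n * (2 * pi / real N) = 2 * pi * of_int m"
      by (auto simp: z_def exp_eq_1)
    then have "real_of_int n = of_int m * real N"
      using False by (simp add: field_simps)
    then have "n = m * int N"
      by (metis of_int_eq_iff of_int_mult of_int_of_nat_eq)
    with assms show False by simp
  qed
  then have "(\<Sum>j<N. z ^ j) = 0"
    by (simp add: geometric_sum zN)
  then show ?thesis
    by (simp only: z_def)
qed simp

lemma grid_sum_exp:
  fixes n :: int
  assumes "\<bar>n\<bar> < 4 * int K + 1"
  shows "(\<Sum>l\<in>{-2 * int K..2 * int K}. exp (\<i> * of_int n * complex_of_real (grid_pt K l)))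
    = (if n = 0 then of_nat (4 * K + 1) else 0)"
proof (cases "n = 0")
  case False
  define N where "N = 4 * K + 1"
  have grid: "{-2 * int K..2 * int K} = (\<lambda>j. int j - 2 * int K) ` {..<N}"
  proof (intro set_eqI iffI)
    fix l assume "l \<in> {-2 * int K..2 * int K}"
    then have "l = int (nat (l + 2 * int K)) - 2 * int K" "nat (l + 2 * int K) < N"
      by (auto simp: N_def)
    then show "l \<in> (\<lambda>j. int j - 2 * int K) ` {..<N}" by blast
  qed (auto simp: N_def)
  have inj: "inj_on (\<lambda>j. int j - 2 * int K) {..<N}"
    by (auto simp: inj_on_def)
  define a where "a = 2 * pi / real N"
  define z where "z = exp (\<i> * of_int n * complex_of_real a)"
  define w where "w = exp (- (\<i> * of_int n * complex_of_real a * of_int (2 * int K)))"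
  have "exp (\<i> * of_int n * complex_of_real (grid_pt K (int j - 2 * int K))) = w * z ^ j" for j
  proof -
    have "grid_pt K l = a * of_int l" for l
      by (simp add: grid_pt_def a_def N_def)
    then have "\<i> * of_int n * complex_of_real (grid_pt K (int j - 2 * int K))
        = - (\<i> * of_int n * complex_of_real a * of_int (2 * int K)) + of_nat j * (\<i> * of_int n * complex_of_real a)"
      by (simp add: algebra_simps)
    then show ?thesis
      by (simp only: w_def z_def exp_add exp_of_nat_mult)
  qed
  then have "(\<Sum>l\<in>{-2 * int K..2 * int K}. exp (\<i> * of_int n * complex_of_real (grid_pt K l))) = w * (\<Sum>j<N. z ^ j)"
    unfolding grid by (simp add: sum.reindex[OF inj] sum_distrib_left)
  moreover have "\<not> int N dvd n"
    using False assms by (auto simp: N_def dest: dvd_imp_le_int)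
  ultimately show ?thesis
    using False sum_power_root_of_unity_eq_0[of N n] by (simp add: z_def a_def)
qed simp

lemma of_real_pK:
  "complex_of_real (pK K x) =
   (\<Sum>j\<in>{-int K..int K}. exp (\<i> * of_int j * complex_of_real x)) *
   (\<Sum>k\<in>{-int K..int K}. exp (\<i> * of_int k * complex_of_real x)) / (2 * of_nat K + 1)"
  unfolding pK_eq_dirichlet_kernel sum_exp_eq_dirichlet_kernel by (simp add: power2_eq_square)

lemma grid_sum_exp_mult_pK:
  fixes m :: int
  assumes "\<bar>m\<bar> + 2 * int K < 4 * int K + 1"
  shows "(\<Sum>l\<in>{-2 * int K..2 * int K}.
            exp (\<i> * of_int m * complex_of_real (grid_pt K l)) * complex_of_real (pK K (grid_pt K l - \<psi>)))
     = of_real (real (4 * K + 1) * real (card {j\<in>{-int K..int K}. -m-j \<in> {-int K..int K}}) / (2 * real K + 1))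
       * exp (\<i> * of_int m * complex_of_real \<psi>)"
proof -
  define J where "J = {-int K..int K}"
  define L where "L = {-2 * int K..2 * int K}"
  define E where "E x k = exp (\<i> * of_int k * complex_of_real x)" for x k
  define N where "N = 4 * K + 1"
  have key: "E (grid_pt K l) m * (E (grid_pt K l - \<psi>) k * E (grid_pt K l - \<psi>) j)
      = E \<psi> (- (j + k)) * E (grid_pt K l) (m + j + k)" for l j k
    unfolding E_def mult_exp_exp by (rule arg_cong[where f=exp]) (simp add: algebra_simps)
  have orth: "(\<Sum>l\<in>L. E (grid_pt K l) (m + j + k)) = (if k = -m-j then of_nat N else 0)"
    if "j \<in> J" "k \<in> J" for j k
  proof -
    have "\<bar>m + j + k\<bar> < 4 * int K + 1"
      using that assms by (auto simp: J_def)
    from grid_sum_exp[OF this] show ?thesis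
      unfolding L_def E_def N_def by auto
  qed
  have "(\<Sum>l\<in>L. E (grid_pt K l) m * complex_of_real (pK K (grid_pt K l - \<psi>)))
      = (\<Sum>l\<in>L. \<Sum>j\<in>J. \<Sum>k\<in>J. E (grid_pt K l) m * (E (grid_pt K l - \<psi>) k * E (grid_pt K l - \<psi>) j))
          / (2 * of_nat K + 1)"
    unfolding of_real_pK E_def J_def
    by (simp add: sum_divide_distrib sum_distrib_left sum_distrib_right mult.assoc)
  also have "\<dots> = (\<Sum>j\<in>J. \<Sum>k\<in>J. E \<psi> (- (j + k)) * (\<Sum>l\<in>L. E (grid_pt K l) (m + j + k))) / (2 * of_nat K + 1)"
    unfolding key sum_distrib_left
    by (subst sum.swap, subst (2) sum.swap, simp)
  also have "\<dots> = (\<Sum>j\<in>J. \<Sum>k\<in>J. if k = -m-j then of_nat N * E \<psi> m else 0) / (2 * of_nat K + 1)"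
  proof (intro arg_cong2[where f="(/)"] sum.cong refl)
    fix j k assume "j \<in> J" "k \<in> J"
    then show "E \<psi> (- (j + k)) * (\<Sum>l\<in>L. E (grid_pt K l) (m + j + k))
        = (if k = -m-j then of_nat N * E \<psi> m else 0)"
      by (simp only: orth) (simp add: E_def)
  qed
  also have "\<dots> = of_nat (card {j\<in>J. -m-j \<in> J}) * of_nat N * E \<psi> m / (2 * of_nat K + 1)"
    by (simp add: sum.delta' J_def flip: sum.inter_filter)
  finally show ?thesis
    unfolding J_def L_def N_def E_def by (simp add: field_simps)
qed

lemma grid_sum_pK: "(\<Sum>l\<in>{-2 * int K..2 * int K}. pK K (grid_pt K l - \<psi>)) = 4 * real K + 1"
proof -
  have "{j\<in>{-int K..int K}. -0-j \<in> {-int K..int K}} = {-int K..int K}"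
    by auto
  then have "real (4 * K + 1) * real (card {j\<in>{-int K..int K}. -0-j \<in> {-int K..int K}}) / (2 * real K + 1)
      = 4 * real K + 1"
    by simp
  then show ?thesis
    using arg_cong[OF grid_sum_exp_mult_pK[of 0 K \<psi>], of Re] by simp
qed

definition grid_conv :: "nat \<Rightarrow> (real \<Rightarrow> real) \<Rightarrow> real \<Rightarrow> real" where
  "grid_conv K h \<psi> =
     (\<Sum>l\<in>{-2 * int K..2 * int K}. h (grid_pt K l) * pK K (grid_pt K l - \<psi>)) / (4 * real K + 1)"

lemma grid_conv_const: "grid_conv K (\<lambda>_. c) \<psi> = c"
  unfolding grid_conv_def sum_distrib_left[symmetric] grid_sum_pK by simp

lemma grid_conv_cos_sin: "\<exists>C. \<forall>\<psi>. grid_conv K (\<lambda>\<theta>. cos \<theta> * sin \<theta>) \<psi> = C * (cos \<psi> * sin \<psi>)"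
proof (cases "K = 0")
  case True
  then show ?thesis by (auto simp: grid_conv_def grid_pt_def)
next
  case False
  define c where "c = real (4 * K + 1) * real (card {j\<in>{-int K..int K}. -2-j \<in> {-int K..int K}}) / (2 * real K + 1)"
  have "\<bar>2\<bar> + 2 * int K < 4 * int K + 1"
    using False by simp
  note grid_sum = grid_sum_exp_mult_pK[OF this]
  have "grid_conv K (\<lambda>\<theta>. cos \<theta> * sin \<theta>) \<psi> = c / (4 * real K + 1) * (cos \<psi> * sin \<psi>)" for \<psi>
  proof -
    have "(\<Sum>l\<in>{-2 * int K..2 * int K}. sin (2 * grid_pt K l) * pK K (grid_pt K l - \<psi>)) = c * sin (2 * \<psi>)"
      using arg_cong[OF grid_sum[of \<psi>], of Im] by (simp add: c_def Im_exp)
    then have "2 * (\<Sum>l\<in>{-2 * int K..2 * int K}. cos (grid_pt K l) * sin (grid_pt K l) * pK K (grid_pt K l - \<psi>))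
        = 2 * (c * (cos \<psi> * sin \<psi>))"
      unfolding sin_double sum_distrib_left by (simp add: algebra_simps)
    then show ?thesis
      by (simp add: grid_conv_def)
  qed
  then show ?thesis by blast
qed

lemma grid_pt_bounds:
  assumes "l \<in> {-2 * int K..2 * int K}"
  shows "-pi < grid_pt K l" "grid_pt K l < pi"
proof -
  have "\<bar>real_of_int l\<bar> * (2 * pi) \<le> 2 * real K * (2 * pi)"
    using assms by (intro mult_right_mono) auto
  also have "\<dots> < pi * (4 * real K + 1)"
    by (simp add: algebra_simps)
  finally have "\<bar>grid_pt K l\<bar> < pi"
    by (simp add: grid_pt_def abs_mult abs_divide field_simps)
  then show "-pi < grid_pt K l" "grid_pt K l < pi" by auto
qed

lemma abs_grid_conv_le:
  assumes "\<And>x. x \<in> {-pi..pi} \<Longrightarrow> \<bar>f x\<bar> \<le> M"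
  shows "\<bar>grid_conv K f \<psi>\<bar> \<le> M"
proof -
  have "\<bar>\<Sum>l\<in>{-2 * int K..2 * int K}. f (grid_pt K l) * pK K (grid_pt K l - \<psi>)\<bar>
      \<le> (\<Sum>l\<in>{-2 * int K..2 * int K}. M * pK K (grid_pt K l - \<psi>))"
  proof (rule order_trans[OF sum_abs sum_mono])
    fix l assume "l \<in> {-2 * int K..2 * int K}"
    then have "\<bar>f (grid_pt K l)\<bar> \<le> M"
      using assms grid_pt_bounds[of l K] by simp
    then show "\<bar>f (grid_pt K l) * pK K (grid_pt K l - \<psi>)\<bar> \<le> M * pK K (grid_pt K l - \<psi>)"
      by (simp add: abs_mult pK_nonneg mult_right_mono)
  qed
  then show ?thesis
    unfolding grid_conv_def sum_distrib_left[symmetric] grid_sum_pK by (simp add: abs_divide divide_le_eq)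
qed

section \<open>Pointwise convergence of the grid convolution\<close>

lemma sin_half_sq_le:
  assumes "0 \<le> d" "d \<le> \<bar>x\<bar>" "\<bar>x\<bar> \<le> 2 * pi - d"
  shows "(sin (d / 2))\<^sup>2 \<le> (sin (x / 2))\<^sup>2"
proof -
  have "cos x \<le> cos d"
  proof (cases "\<bar>x\<bar> \<le> pi")
    case True
    then show ?thesis
      using assms cos_monotone_0_pi_le[of d "\<bar>x\<bar>"] by (simp add: cos_abs_real)
  next
    case False
    have "cos x = cos (2 * pi - \<bar>x\<bar>)"
      by (simp add: cos_abs_real)
    also have "\<dots> \<le> cos d"
      using assms False by (intro cos_monotone_0_pi_le) auto
    finally show ?thesis .
  qed
  moreover have cos_eq: "cos y = 1 - 2 * (sin (y / 2))\<^sup>2" for y :: real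
    using cos_double_sin[of "y / 2"] by simp
  ultimately show ?thesis
    using cos_eq[of x] cos_eq[of d] by linarith
qed

lemma grid_conv_diff_le:
  assumes "\<And>l. l \<in> {-2 * int K..2 * int K} \<Longrightarrow>
      \<bar>f (grid_pt K l) - f \<psi>\<bar> * pK K (grid_pt K l - \<psi>) \<le> e * pK K (grid_pt K l - \<psi>) + B"
  shows "\<bar>grid_conv K f \<psi> - f \<psi>\<bar> \<le> e + B"
proof -
  define N where "N = 4 * real K + 1"
  have N: "N > 0" by (simp add: N_def)
  have "grid_conv K f \<psi> - f \<psi>
      = (\<Sum>l\<in>{-2 * int K..2 * int K}. (f (grid_pt K l) - f \<psi>) * pK K (grid_pt K l - \<psi>)) / N"
    using N unfolding grid_conv_def N_def[symmetric] left_diff_distrib sum_subtractf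
      sum_distrib_left[symmetric] grid_sum_pK by (simp add: field_simps)
  also have "\<bar>\<dots>\<bar> \<le> (\<Sum>l\<in>{-2 * int K..2 * int K}. e * pK K (grid_pt K l - \<psi>) + B) / N"
    using N assms
    by (auto simp: abs_mult pK_nonneg intro!: divide_right_mono order_trans[OF sum_abs sum_mono])
  also have "\<dots> = e + B"
    using N unfolding sum.distrib sum_distrib_left[symmetric] grid_sum_pK by (simp add: N_def field_simps)
  finally show ?thesis .
qed

lemma grid_conv_dist_le:
  assumes \<delta>: "0 < \<delta>" "\<delta> \<le> pi - \<bar>\<psi>\<bar>"
    and near: "\<And>y. y \<in> {-pi..pi} \<Longrightarrow> \<bar>y - \<psi>\<bar> < \<delta> \<Longrightarrow> \<bar>f y - f \<psi>\<bar> \<le> e"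
    and M: "\<And>y. y \<in> {-pi..pi} \<Longrightarrow> \<bar>f y\<bar> \<le> M"
  shows "\<bar>grid_conv K f \<psi> - f \<psi>\<bar> \<le> e + 2 * M / ((sin (\<delta> / 2))\<^sup>2 * (2 * real K + 1))"
proof (rule grid_conv_diff_le)
  define c where "c = (sin (\<delta> / 2))\<^sup>2"
  have c: "c > 0"
    unfolding c_def using \<delta> by (intro zero_less_power sin_gt_zero) auto
  have \<psi>: "\<psi> \<in> {-pi..pi}"
    using \<delta> by auto
  have e: "0 \<le> e"
    using near[OF \<psi>] \<delta> by simp
  fix l assume "l \<in> {-2 * int K..2 * int K}"
  then have y: "grid_pt K l \<in> {-pi..pi}"
    using grid_pt_bounds[of l K] by simp
  have M0: "0 \<le> 2 * M / (c * (2 * real K + 1))"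
    using M[OF y] c by simp
  show "\<bar>f (grid_pt K l) - f \<psi>\<bar> * pK K (grid_pt K l - \<psi>)
      \<le> e * pK K (grid_pt K l - \<psi>) + 2 * M / ((sin (\<delta> / 2))\<^sup>2 * (2 * real K + 1))"
  proof (cases "\<bar>grid_pt K l - \<psi>\<bar> < \<delta>")
    case True
    then have "\<bar>f (grid_pt K l) - f \<psi>\<bar> * pK K (grid_pt K l - \<psi>) \<le> e * pK K (grid_pt K l - \<psi>)"
      using near[OF y] by (intro mult_right_mono pK_nonneg)
    with M0 show ?thesis
      unfolding c_def by linarith
  next
    case False
    then have "c \<le> (sin ((grid_pt K l - \<psi>) / 2))\<^sup>2"
      unfolding c_def using \<delta> y by (intro sin_half_sq_le) auto
    then have "pK K (grid_pt K l - \<psi>) \<le> 1 / (c * (2 * real K + 1))"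
      by (rule pK_le_inverse_sin_sq[OF c])
    moreover have "\<bar>f (grid_pt K l) - f \<psi>\<bar> \<le> 2 * M"
      using M[OF y] M[OF \<psi>] by linarith
    ultimately have "\<bar>f (grid_pt K l) - f \<psi>\<bar> * pK K (grid_pt K l - \<psi>) \<le> 2 * M * (1 / (c * (2 * real K + 1)))"
      by (intro mult_mono) (auto simp: pK_nonneg)
    moreover have "0 \<le> e * pK K (grid_pt K l - \<psi>)"
      using e by (simp add: pK_nonneg)
    ultimately show ?thesis
      by (simp add: c_def)
  qed
qed

lemma grid_conv_tendsto:
  assumes cont: "continuous_on {-pi..pi} f" and \<psi>: "-pi < \<psi>" "\<psi> < pi"
  shows "(\<lambda>K. grid_conv K f \<psi>) \<longlonglongrightarrow> f \<psi>"
proof (rule tendstoI)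
  fix e :: real assume e: "e > 0"
  obtain M where M: "\<And>x. x \<in> {-pi..pi} \<Longrightarrow> \<bar>f x\<bar> \<le> M"
    using continuous_on_compact_bound[OF compact_Icc cont] by (metis real_norm_def)
  obtain d where d: "d > 0" and near: "\<And>y. y \<in> {-pi..pi} \<Longrightarrow> \<bar>y - \<psi>\<bar> < d \<Longrightarrow> \<bar>f y - f \<psi>\<bar> < e / 2"
    using cont \<psi> e unfolding continuous_on_iff dist_real_def
    by (metis atLeastAtMost_iff half_gt_zero less_eq_real_def)
  define \<delta> where "\<delta> = min d (pi - \<bar>\<psi>\<bar>)"
  define B where "B K = 2 * M / ((sin (\<delta> / 2))\<^sup>2 * (2 * real K + 1))" for K
  have \<delta>: "0 < \<delta>" "\<delta> \<le> pi - \<bar>\<psi>\<bar>"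
    using d \<psi> by (auto simp: \<delta>_def)
  have "\<bar>f y - f \<psi>\<bar> \<le> e / 2" if "y \<in> {-pi..pi}" "\<bar>y - \<psi>\<bar> < \<delta>" for y
    using near[OF that(1)] that(2) by (simp add: \<delta>_def)
  then have bound: "\<bar>grid_conv K f \<psi> - f \<psi>\<bar> \<le> e / 2 + B K" for K
    unfolding B_def by (rule grid_conv_dist_le[OF \<delta>(1,2) _ M])
  have "(sin (\<delta> / 2))\<^sup>2 > 0"
    using \<delta> by (intro zero_less_power sin_gt_zero) auto
  then have "B \<longlonglongrightarrow> 0"
    unfolding B_def by real_asymp
  then have "eventually (\<lambda>K. B K < e / 2) sequentially"
    using e by (intro order_tendstoD(2)) auto
  then show "eventually (\<lambda>K. dist (grid_conv K f \<psi>) (f \<psi>) < e) sequentially"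
  proof (rule eventually_mono)
    fix K assume "B K < e / 2"
    with bound[of K] show "dist (grid_conv K f \<psi>) (f \<psi>) < e"
      by (simp add: dist_real_def)
  qed
qed

section \<open>rhoK as a convolution\<close>

lemma interval_integral_pi_eq:
  fixes g :: "real \<Rightarrow> real"
  shows "(LBINT \<theta>=-pi..pi. g \<theta>) = (\<integral>\<theta>. indicator {-pi..pi} \<theta> * g \<theta> \<partial>lborel)"
proof -
  have "- ereal pi = ereal (-pi)" by simp
  then show ?thesis
    by (simp add: interval_integral_Icc set_lebesgue_integral_def)
qed

lemma per_ext_eq_sum_shifts:
  assumes "-2 * pi < x" "x < 2 * pi"
  shows "per_ext \<rho> x = (\<Sum>n\<in>{-1,0,1::int}.
           indicator {-pi..<pi} (x - 2 * pi * of_int n) * \<rho> (x - 2 * pi * of_int n))"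
proof -
  define n0 where "n0 = \<lfloor>(x + pi) / (2 * pi)\<rfloor>"
  have window: "x - 2 * pi * of_int n \<in> {-pi..<pi} \<longleftrightarrow> n = n0" for n
  proof -
    have "x - 2 * pi * of_int n \<in> {-pi..<pi} \<longleftrightarrow> of_int n \<le> (x + pi) / (2 * pi) \<and> (x + pi) / (2 * pi) < of_int n + 1"
      by (auto simp: field_simps)
    also have "\<dots> \<longleftrightarrow> n = n0"
      unfolding n0_def by (auto intro: floor_unique) linarith+
    finally show ?thesis .
  qed
  have "-1 < (x + pi) / (2 * pi)" "(x + pi) / (2 * pi) < 2"
    using assms by (auto simp: field_simps)
  then have "-1 \<le> n0" "n0 \<le> 1"
    unfolding n0_def by linarith+
  then have "n0 \<in> {-1,0,1}"
    by auto
  have "(\<Sum>n\<in>{-1,0,1::int}. indicator {-pi..<pi} (x - 2 * pi * of_int n) * \<rho> (x - 2 * pi * of_int n))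
      = (\<Sum>n\<in>{-1,0,1::int}. if n = n0 then \<rho> (x - 2 * pi * of_int n) else 0)"
    by (intro sum.cong refl) (simp only: indicator_def window, simp)
  also have "\<dots> = per_ext \<rho> x"
    using \<open>n0 \<in> {-1,0,1}\<close> by (simp only: sum.delta finite.intros) (simp add: per_ext_def n0_def)
  finally show ?thesis ..
qed

lemma sum_indicator_shifts:
  assumes "-2 * pi < y" "y < 2 * pi" "y \<noteq> pi" "y \<noteq> -pi"
  shows "(\<Sum>n\<in>{-1,0,1::int}. indicator {-pi..pi} (y - 2 * pi * of_int n) :: real) = 1"
proof -
  have "(\<Sum>n\<in>{-1,0,1::int}. indicator {-pi..pi} (y - 2 * pi * of_int n) :: real)
      = indicator {-pi..pi} (y + 2 * pi) + indicator {-pi..pi} y + indicator {-pi..pi} (y - 2 * pi)"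
    by simp
  also have "\<dots> = 1"
    using assms pi_gt_zero unfolding indicator_def by (auto split: if_split)
  finally show ?thesis .
qed

lemma sum_indicator_shifts_mult:
  fixes g :: "real \<Rightarrow> real"
  assumes "-pi < \<theta>" "\<theta> < pi" "x \<notin> {\<theta> - pi, \<theta> + pi, pi}"
  shows "(\<Sum>n\<in>{-1,0,1::int}. indicator {-pi..pi} (\<theta> - 2 * pi * of_int n - x) * (indicator {-pi..<pi} x * g x))
    = indicator {-pi..pi} x * g x"
proof (cases "x \<in> {-pi..<pi}")
  case True
  then have "-2 * pi < \<theta> - x" "\<theta> - x < 2 * pi" "\<theta> - x \<noteq> pi" "\<theta> - x \<noteq> -pi"
    using assms by auto
  then have "(\<Sum>n\<in>{-1,0,1::int}. indicator {-pi..pi} (\<theta> - x - 2 * pi * of_int n)) = (1::real)"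
    by (rule sum_indicator_shifts)
  moreover have "(\<Sum>n\<in>{-1,0,1::int}. indicator {-pi..pi} (\<theta> - 2 * pi * of_int n - x) * (indicator {-pi..<pi} x * g x))
      = (\<Sum>n\<in>{-1,0,1::int}. indicator {-pi..pi} (\<theta> - x - 2 * pi * of_int n) * g x)"
    using True by (intro sum.cong refl) (simp add: algebra_simps)
  ultimately show ?thesis
    using True by (simp flip: sum_distrib_right)
qed (use assms in \<open>auto simp: indicator_def\<close>)

lemma integrable_window_mult_pK:
  fixes r :: "real \<Rightarrow> real"
  assumes "integrable lborel r"
  shows "integrable lborel (\<lambda>x. indicator {-pi..pi} (a - x) * (r x * pK K (\<theta> - x)))"
proof (rule Bochner_Integration.integrable_bound)
  show "integrable lborel (\<lambda>x. (2 * real K + 1) * r x)"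
    using assms by simp
  have "r \<in> borel_measurable borel"
    using assms by (simp add: borel_measurable_integrable)
  then show "(\<lambda>x. indicator {-pi..pi} (a - x) * (r x * pK K (\<theta> - x))) \<in> borel_measurable lborel"
    by measurable
  show "AE x in lborel. norm (indicator {-pi..pi} (a - x) * (r x * pK K (\<theta> - x))) \<le> norm ((2 * real K + 1) * r x)"
    using pK_le[of K] pK_nonneg[of K]
    by (intro AE_I2) (auto simp: indicator_def abs_mult mult.commute intro: mult_left_mono)
qed

lemma integral_window_mult_pK_reflect:
  fixes r :: "real \<Rightarrow> real" and \<theta> :: real and n :: int and K :: nat
  assumes "integrable lborel r"
  defines "F \<equiv> \<lambda>\<phi>. indicator {-pi..pi} \<phi> * (r (\<theta> - \<phi> - 2 * pi * of_int n) * pK K \<phi>)"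
  shows "integrable lborel F"
    and "integral\<^sup>L lborel F
       = (\<integral>x. indicator {-pi..pi} (\<theta> - 2 * pi * of_int n - x) * (r x * pK K (\<theta> - x)) \<partial>lborel)"
proof -
  have "pK K (\<theta> - 2 * pi * of_int n - x) = pK K (\<theta> - x)" for x
    using pK_periodic[of K "\<theta> - 2 * pi * of_int n - x" n] by simp
  then have reflect: "(\<lambda>x. F (\<theta> - 2 * pi * of_int n - x))
      = (\<lambda>x. indicator {-pi..pi} (\<theta> - 2 * pi * of_int n - x) * (r x * pK K (\<theta> - x)))"
    by (simp add: F_def)
  have "integrable lborel (\<lambda>x. F (\<theta> - 2 * pi * of_int n - x))"
    unfolding reflect by (rule integrable_window_mult_pK[OF assms(1)])
  then show "integrable lborel F"
    using lborel_integrable_real_affine_iff[of "-1" F "\<theta> - 2 * pi * of_int n"] by simp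
  show "integral\<^sup>L lborel F
      = (\<integral>x. indicator {-pi..pi} (\<theta> - 2 * pi * of_int n - x) * (r x * pK K (\<theta> - x)) \<partial>lborel)"
    using lborel_integral_real_affine[of "-1" F "\<theta> - 2 * pi * of_int n"] by (simp add: reflect)
qed

lemma rhoK_eq_convolution:
  assumes "set_integrable lborel {-pi..pi} \<rho>" and \<theta>: "-pi < \<theta>" "\<theta> < pi"
  shows "rhoK \<rho> K \<theta> = (\<integral>\<psi>. indicator {-pi..pi} \<psi> * \<rho> \<psi> * pK K (\<theta> - \<psi>) \<partial>lborel) / (2 * pi)"
proof -
  define r where "r x = indicator {-pi..<pi} x * \<rho> x" for x
  have "set_integrable lborel {-pi..<pi} \<rho>"
    using assms(1) by (rule set_integrable_subset) auto
  then have r: "integrable lborel r"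
    unfolding r_def[abs_def] by (simp add: set_integrable_def)
  \<comment> \<open>per_ext picks one of three translates of r; after the substitution x = \<theta> - 2\<pi>n - \<phi>
    and by periodicity of pK, the three reflected windows tile the line up to a null set.\<close>
  define F where "F n \<phi> = indicator {-pi..pi} \<phi> * (r (\<theta> - \<phi> - 2 * pi * of_int n) * pK K \<phi>)" for n :: int and \<phi>
  define G where "G n x = indicator {-pi..pi} (\<theta> - 2 * pi * of_int n - x) * (r x * pK K (\<theta> - x))" for n :: int and x
  have "2 * pi * rhoK \<rho> K \<theta> = (\<integral>\<phi>. indicator {-pi..pi} \<phi> * (per_ext \<rho> (\<theta> - \<phi>) * pK K \<phi>) \<partial>lborel)"
    by (simp add: rhoK_def interval_integral_pi_eq)
  also have "\<dots> = (\<integral>\<phi>. (\<Sum>n\<in>{-1,0,1}. F n \<phi>) \<partial>lborel)"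
  proof (intro Bochner_Integration.integral_cong refl)
    fix \<phi>
    show "indicator {-pi..pi} \<phi> * (per_ext \<rho> (\<theta> - \<phi>) * pK K \<phi>) = (\<Sum>n\<in>{-1,0,1}. F n \<phi>)"
    proof (cases "\<phi> \<in> {-pi..pi}")
      case True
      then have "-2 * pi < \<theta> - \<phi>" "\<theta> - \<phi> < 2 * pi"
        using \<theta> by auto
      note shifts = per_ext_eq_sum_shifts[OF this]
      show ?thesis
        unfolding shifts F_def r_def
        by (simp only: sum_distrib_left sum_distrib_right mult.assoc)
    qed (simp add: F_def)
  qed
  also have "\<dots> = (\<Sum>n\<in>{-1,0,1}. integral\<^sup>L lborel (F n))"
    using integral_window_mult_pK_reflect(1)[OF r] by (intro Bochner_Integration.integral_sum) (simp add: F_def)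
  also have "\<dots> = (\<Sum>n\<in>{-1,0,1}. integral\<^sup>L lborel (G n))"
    unfolding F_def[abs_def] G_def[abs_def] by (simp only: integral_window_mult_pK_reflect(2)[OF r])
  also have "\<dots> = (\<integral>x. (\<Sum>n\<in>{-1,0,1}. G n x) \<partial>lborel)"
    using integrable_window_mult_pK[OF r]
    by (intro Bochner_Integration.integral_sum[symmetric]) (simp add: G_def[abs_def])
  also have "\<dots> = (\<integral>x. indicator {-pi..pi} x * \<rho> x * pK K (\<theta> - x) \<partial>lborel)"
    using sum_indicator_shifts_mult[OF \<theta>, of _ "\<lambda>x. \<rho> x * pK K (\<theta> - x)"]
    by (intro integral_discrete_difference[where X="{\<theta> - pi, \<theta> + pi, pi}"])
      (auto simp: G_def r_def mult_ac)
  finally show ?thesis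
    by (simp add: field_simps)
qed

section \<open>Finite sums of weighted point masses\<close>

lemma sum_image_mult_sum_if:
  fixes w :: "'i \<Rightarrow> 'b::comm_semiring_1"
  assumes "finite L"
  shows "(\<Sum>x\<in>p ` L. (\<Sum>l\<in>L. if x = p l then w l else 0) * h x) = (\<Sum>l\<in>L. w l * h (p l))"
proof -
  have "(\<Sum>x\<in>p ` L. (\<Sum>l\<in>L. if x = p l then w l else 0) * h x)
      = (\<Sum>l\<in>L. \<Sum>x\<in>p ` L. if x = p l then w l * h x else 0)"
    unfolding sum_distrib_right by (subst sum.swap) (intro sum.cong refl, simp)
  also have "\<dots> = (\<Sum>l\<in>L. w l * h (p l))"
    using assms by (intro sum.cong refl) (simp add: sum.delta)
  finally show ?thesis .
qed

lemma sum_if_eq_notin_image: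
  "x \<notin> p ` L \<Longrightarrow> (\<Sum>l\<in>L. if x = p l then w l else 0) = 0"
  by (rule sum.neutral) auto

lemma emeasure_point_measure_sum_if:
  fixes w :: "'i \<Rightarrow> real"
  assumes L: "finite L" and w: "\<And>l. l \<in> L \<Longrightarrow> 0 \<le> w l"
  shows "emeasure (point_measure UNIV (\<lambda>x. ennreal (\<Sum>l\<in>L. if x = p l then w l else 0))) X
    = ennreal (\<Sum>l\<in>{l\<in>L. p l \<in> X}. w l)"
proof -
  define g where "g x = (\<Sum>l\<in>L. if x = p l then w l else 0)" for x
  have g: "g x \<ge> 0" for x
    unfolding g_def using w by (intro sum_nonneg) auto
  have support: "{x\<in>X. 0 < ennreal (g x)} \<subseteq> p ` L \<inter> X"
    using sum_if_eq_notin_image[of _ p L w] by (force simp: g_def)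
  have "emeasure (point_measure UNIV (\<lambda>x. ennreal (g x))) X = (\<Sum>x | x \<in> X \<and> 0 < ennreal (g x). ennreal (g x))"
    using L by (intro emeasure_point_measure finite_subset[OF support]) auto
  also have "\<dots> = (\<Sum>x\<in>p ` L \<inter> X. ennreal (g x))"
    using L support g by (intro sum.mono_neutral_left) (auto simp: order_less_le)
  also have "\<dots> = ennreal (\<Sum>x\<in>p ` L \<inter> X. g x)"
    using g by (simp add: sum_ennreal)
  also have "\<dots> = ennreal (\<Sum>x\<in>p ` L. g x * indicator X x)"
    using L by (simp add: sum.inter_restrict indicator_def if_distrib)
  also have "\<dots> = ennreal (\<Sum>l\<in>{l\<in>L. p l \<in> X}. w l)"
    unfolding g_def sum_image_mult_sum_if[OF L] using L by (simp add: sum.inter_filter)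
  finally show ?thesis
    by (simp add: g_def)
qed

lemma integral_point_measure_sum_if:
  fixes w :: "'i \<Rightarrow> real" and h :: "'a \<Rightarrow> real"
  assumes L: "finite L" and w: "\<And>l. l \<in> L \<Longrightarrow> 0 \<le> w l"
  shows "(\<integral>x. h x \<partial>point_measure UNIV (\<lambda>x. ennreal (\<Sum>l\<in>L. if x = p l then w l else 0)))
    = (\<Sum>l\<in>L. w l * h (p l))"
proof -
  define g where "g x = (\<Sum>l\<in>L. if x = p l then w l else 0)" for x
  have g: "g x \<ge> 0" for x
    unfolding g_def using w by (intro sum_nonneg) auto
  have support: "{x \<in> UNIV. g x * h x \<noteq> 0} \<subseteq> p ` L"
    using sum_if_eq_notin_image[of _ p L w] by (force simp: g_def)
  have "(\<integral>x. h x \<partial>point_measure UNIV (\<lambda>x. ennreal (g x))) = (\<integral>x. g x * h x \<partial>count_space UNIV)"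
    unfolding point_measure_def using g by (subst integral_density) auto
  also have "\<dots> = (\<Sum>x | x \<in> UNIV \<and> g x * h x \<noteq> 0. g x * h x)"
    using L by (intro lebesgue_integral_count_space_finite_support finite_subset[OF support]) auto
  also have "\<dots> = (\<Sum>x\<in>p ` L. g x * h x)"
    using L support by (intro sum.mono_neutral_left) auto
  also have "\<dots> = (\<Sum>l\<in>L. w l * h (p l))"
    unfolding g_def by (rule sum_image_mult_sum_if[OF L])
  finally show ?thesis
    by (simp add: g_def)
qed

section \<open>The measures nuK\<close>

locale circle_density =
  fixes \<rho> :: "real \<Rightarrow> real"
  assumes nonneg: "\<And>\<theta>. \<theta> \<in> {-pi..pi} \<Longrightarrow> \<rho> \<theta> \<ge> 0"
    and integrable: "set_integrable lborel {-pi..pi} \<rho>"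
begin

definition dens :: "real \<Rightarrow> real" where
  "dens x = indicator {-pi..pi} x * \<rho> x"

lemma dens_nonneg: "dens x \<ge> 0"
  using nonneg by (simp add: dens_def indicator_def)

lemma integrable_dens: "integrable lborel dens"
  using integrable by (simp add: set_integrable_def dens_def[abs_def])

lemma dens_borel_measurable [measurable]: "dens \<in> borel_measurable borel"
  using integrable_dens by (simp add: borel_measurable_integrable)

lemma integral_interval_eq_dens: "(LBINT \<theta>=-pi..pi. f \<theta> * \<rho> \<theta>) = (\<integral>\<theta>. dens \<theta> * f \<theta> \<partial>lborel)"
  by (simp add: interval_integral_pi_eq dens_def mult_ac)

lemma integrable_dens_mult_pK: "integrable lborel (\<lambda>\<psi>. dens \<psi> * pK K (a - \<psi>))"
proof (rule Bochner_Integration.integrable_bound)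
  show "integrable lborel (\<lambda>\<psi>. (2 * real K + 1) * dens \<psi>)"
    using integrable_dens by simp
  show "AE \<psi> in lborel. norm (dens \<psi> * pK K (a - \<psi>)) \<le> norm ((2 * real K + 1) * dens \<psi>)"
    using pK_le[of K] pK_nonneg[of K] dens_nonneg
    by (intro AE_I2) (simp add: abs_mult mult.commute mult_left_mono)
qed measurable

lemma rhoK_grid_pt:
  assumes "l \<in> {-2 * int K..2 * int K}"
  shows "rhoK \<rho> K (grid_pt K l) = (\<integral>\<psi>. dens \<psi> * pK K (grid_pt K l - \<psi>) \<partial>lborel) / (2 * pi)"
  using rhoK_eq_convolution[OF integrable grid_pt_bounds[OF assms]] by (simp add: dens_def)

lemma rhoK_grid_pt_nonneg:
  assumes "l \<in> {-2 * int K..2 * int K}"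
  shows "0 \<le> rhoK \<rho> K (grid_pt K l)"
  unfolding rhoK_grid_pt[OF assms] using dens_nonneg pK_nonneg
  by (intro divide_nonneg_nonneg integral_nonneg) auto

lemma emeasure_nuK:
  "emeasure (nuK \<rho> K) X = ennreal (\<Sum>l\<in>{l\<in>{-2 * int K..2 * int K}. grid_pt K l \<in> X}.
      2 * pi / (4 * real K + 1) * rhoK \<rho> K (grid_pt K l))"
  unfolding nuK_def by (rule emeasure_point_measure_sum_if) (simp_all add: rhoK_grid_pt_nonneg)

lemma integral_nuK_eq_sum:
  "(\<integral>\<theta>. h \<theta> \<partial>nuK \<rho> K)
    = (\<Sum>l\<in>{-2 * int K..2 * int K}. 2 * pi / (4 * real K + 1) * rhoK \<rho> K (grid_pt K l) * h (grid_pt K l))"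
  unfolding nuK_def by (rule integral_point_measure_sum_if) (simp_all add: rhoK_grid_pt_nonneg)

lemma integral_nuK: "(\<integral>\<theta>. h \<theta> \<partial>nuK \<rho> K) = (\<integral>\<psi>. dens \<psi> * grid_conv K h \<psi> \<partial>lborel)"
proof -
  have "(\<integral>\<theta>. h \<theta> \<partial>nuK \<rho> K)
      = (\<Sum>l\<in>{-2 * int K..2 * int K}. 2 * pi / (4 * real K + 1) * rhoK \<rho> K (grid_pt K l) * h (grid_pt K l))"
    by (rule integral_nuK_eq_sum)
  also have "\<dots> = (\<Sum>l\<in>{-2 * int K..2 * int K}.
      \<integral>\<psi>. h (grid_pt K l) / (4 * real K + 1) * (dens \<psi> * pK K (grid_pt K l - \<psi>)) \<partial>lborel)"
    by (intro sum.cong refl) (simp add: rhoK_grid_pt)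
  also have "\<dots> = (\<integral>\<psi>. (\<Sum>l\<in>{-2 * int K..2 * int K}.
      h (grid_pt K l) / (4 * real K + 1) * (dens \<psi> * pK K (grid_pt K l - \<psi>))) \<partial>lborel)"
    by (intro Bochner_Integration.integral_sum[symmetric] integrable_mult_right integrable_dens_mult_pK)
  also have "\<dots> = (\<integral>\<psi>. dens \<psi> * grid_conv K h \<psi> \<partial>lborel)"
    by (intro Bochner_Integration.integral_cong refl)
      (simp add: grid_conv_def sum_distrib_left sum_divide_distrib mult.left_commute)
  finally show ?thesis .
qed

lemma prob_space_nuK:
  assumes "(LBINT \<theta>=-pi..pi. \<rho> \<theta>) = 1"
  shows "prob_space (nuK \<rho> K)"
proof (rule prob_spaceI)
  have "(\<integral>\<theta>. 1 \<partial>nuK \<rho> K) = (\<integral>\<psi>. dens \<psi> \<partial>lborel)"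
    using integral_nuK[where h = "\<lambda>_. 1" and K = K] by (simp only: grid_conv_const mult_1_right)
  also have "\<dots> = 1"
    using assms integral_interval_eq_dens[of "\<lambda>_. 1"] by simp
  finally have "(\<integral>\<theta>. 1 \<partial>nuK \<rho> K) = (1::real)" .
  moreover have "space (nuK \<rho> K) = UNIV"
    by (simp add: nuK_def space_point_measure)
  moreover have "{l\<in>{-2 * int K..2 * int K}. grid_pt K l \<in> UNIV} = {-2 * int K..2 * int K}"
    by blast
  ultimately show "emeasure (nuK \<rho> K) (space (nuK \<rho> K)) = 1"
    using integral_nuK_eq_sum[where h = "\<lambda>_. 1" and K = K] by (simp only: emeasure_nuK) simp
qed

lemma emeasure_nuK_outside: "emeasure (nuK \<rho> K) (UNIV - {-pi..pi}) = 0"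
proof -
  have "{l\<in>{-2 * int K..2 * int K}. grid_pt K l \<in> UNIV - {-pi..pi}} = {}"
    using grid_pt_bounds[of _ K] by force
  then show ?thesis
    unfolding emeasure_nuK by (simp only: sum.empty ennreal_0)
qed

lemma finite_atoms_nuK: "finite {\<theta>. emeasure (nuK \<rho> K) {\<theta>} \<noteq> 0}"
proof (rule finite_subset)
  show "{\<theta>. emeasure (nuK \<rho> K) {\<theta>} \<noteq> 0} \<subseteq> grid_pt K ` {-2 * int K..2 * int K}"
  proof
    fix \<theta> assume atom: "\<theta> \<in> {\<theta>. emeasure (nuK \<rho> K) {\<theta>} \<noteq> 0}"
    have "{l\<in>{-2 * int K..2 * int K}. grid_pt K l = \<theta>} \<noteq> {}"
    proof
      assume empty: "{l\<in>{-2 * int K..2 * int K}. grid_pt K l = \<theta>} = {}"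
      have "emeasure (nuK \<rho> K) {\<theta>} = 0"
        unfolding emeasure_nuK singleton_iff empty by simp
      with atom show False
        by simp
    qed
    then show "\<theta> \<in> grid_pt K ` {-2 * int K..2 * int K}"
      by auto
  qed
qed simp

lemma integral_nuK_cos_sin:
  assumes "(LBINT \<theta>=-pi..pi. \<rho> \<theta> * sin \<theta> * cos \<theta>) = 0"
  shows "(\<integral>\<theta>. cos \<theta> * sin \<theta> \<partial>nuK \<rho> K) = 0"
proof -
  obtain C where "\<And>\<psi>. grid_conv K (\<lambda>\<theta>. cos \<theta> * sin \<theta>) \<psi> = C * (cos \<psi> * sin \<psi>)"
    using grid_conv_cos_sin by blast
  moreover have "(\<integral>\<psi>. dens \<psi> * (cos \<psi> * sin \<psi>) \<partial>lborel) = 0"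
    using assms integral_interval_eq_dens[of "\<lambda>\<theta>. cos \<theta> * sin \<theta>"] by (simp add: mult_ac)
  ultimately show ?thesis
    by (simp add: integral_nuK mult.left_commute[of _ C])
qed

lemma dens_mult_borel_measurable:
  assumes "continuous_on {-pi..pi} f"
  shows "(\<lambda>\<psi>. dens \<psi> * f \<psi>) \<in> borel_measurable borel"
proof -
  have "(\<lambda>x. indicator {-pi..pi} x * f x) \<in> borel_measurable borel"
    using borel_measurable_continuous_on_indicator[OF _ assms] by simp
  moreover have "(\<lambda>\<psi>. dens \<psi> * f \<psi>) = (\<lambda>\<psi>. dens \<psi> * (indicator {-pi..pi} \<psi> * f \<psi>))"
    by (auto simp: dens_def indicator_def)
  ultimately show ?thesis
    by simp
qed

lemma AE_dens_mult_grid_conv_tendsto: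
  assumes "continuous_on {-pi..pi} f"
  shows "AE \<psi> in lborel. (\<lambda>K. dens \<psi> * grid_conv K f \<psi>) \<longlonglongrightarrow> dens \<psi> * f \<psi>"
proof -
  have "AE \<psi> in lborel. \<psi> \<notin> {-pi, pi}"
    by (rule AE_discrete_difference) auto
  then show ?thesis
  proof eventually_elim
    case (elim \<psi>)
    show ?case
    proof (cases "\<psi> \<in> {-pi..pi}")
      case True
      with elim have "-pi < \<psi>" "\<psi> < pi"
        by auto
      then show ?thesis
        by (intro tendsto_mult_left grid_conv_tendsto[OF assms])
    qed (simp add: dens_def)
  qed
qed

lemma integral_nuK_tendsto:
  assumes cont: "continuous_on {-pi..pi} f"
  shows "(\<lambda>K. \<integral>\<theta>. f \<theta> \<partial>nuK \<rho> K) \<longlonglongrightarrow> (LBINT \<theta>=-pi..pi. f \<theta> * \<rho> \<theta>)"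
proof -
  obtain M where M: "\<And>x. x \<in> {-pi..pi} \<Longrightarrow> \<bar>f x\<bar> \<le> M"
    using continuous_on_compact_bound[OF compact_Icc cont] by (metis real_norm_def)
  have "(\<lambda>K. \<integral>\<psi>. dens \<psi> * grid_conv K f \<psi> \<partial>lborel) \<longlonglongrightarrow> (\<integral>\<psi>. dens \<psi> * f \<psi> \<partial>lborel)"
  proof (rule integral_dominated_convergence[where w="\<lambda>\<psi>. M * dens \<psi>"])
    show "(\<lambda>\<psi>. dens \<psi> * f \<psi>) \<in> borel_measurable lborel"
      using dens_mult_borel_measurable[OF cont] by simp
    show "(\<lambda>\<psi>. dens \<psi> * grid_conv K f \<psi>) \<in> borel_measurable lborel" for K
      unfolding grid_conv_def by measurable
    show "integrable lborel (\<lambda>\<psi>. M * dens \<psi>)"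
      using integrable_dens by simp
    show "AE \<psi> in lborel. norm (dens \<psi> * grid_conv K f \<psi>) \<le> M * dens \<psi>" for K
    proof (rule AE_I2)
      fix \<psi>
      have "dens \<psi> * \<bar>grid_conv K f \<psi>\<bar> \<le> dens \<psi> * M"
        using abs_grid_conv_le[OF M] dens_nonneg by (rule mult_left_mono)
      then show "norm (dens \<psi> * grid_conv K f \<psi>) \<le> M * dens \<psi>"
        by (simp add: abs_mult dens_nonneg mult.commute)
    qed
  qed (rule AE_dens_mult_grid_conv_tendsto[OF cont])
  then show ?thesis
    by (simp add: integral_nuK integral_interval_eq_dens)
qed

end

theorem lemma5p4:
  fixes \<rho> :: "real \<Rightarrow> real"
  assumes nonneg: "\<And>\<theta>. \<theta> \<in> {-pi..pi} \<Longrightarrow> \<rho> \<theta> \<ge> 0"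
    and integrable: "set_integrable lborel {-pi..pi} \<rho>"
    and total: "(LBINT \<theta>=-pi..pi. \<rho> \<theta>) = 1"
    and abs_fourier: "(\<lambda>k. norm (fourier_coeff \<rho> k)) summable_on (UNIV :: int set)"
    and sincos: "(LBINT \<theta>=-pi..pi. \<rho> \<theta> * sin \<theta> * cos \<theta>) = 0"
  shows "(\<forall>K. prob_space (nuK \<rho> K)
            \<and> emeasure (nuK \<rho> K) (UNIV - {-pi..pi}) = 0
            \<and> finite {\<theta>. emeasure (nuK \<rho> K) {\<theta>} \<noteq> 0}
            \<and> (\<integral>\<theta>. cos \<theta> * sin \<theta> \<partial>nuK \<rho> K) = 0)
         \<and> (\<forall>f. continuous_on {-pi..pi} f \<longrightarrow>
           (\<lambda>K. \<integral>\<theta>. f \<theta> \<partial>nuK \<rho> K) \<longlonglongrightarrow> (LBINT \<theta>=-pi..pi. f \<theta> * \<rho> \<theta>))"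
proof -
  interpret circle_density \<rho>
    using nonneg integrable by unfold_locales
  show ?thesis
    using prob_space_nuK[OF total] emeasure_nuK_outside finite_atoms_nuK
      integral_nuK_cos_sin[OF sincos] integral_nuK_tendsto by blast
qed

end
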